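(* Let $l$ be a prime and $(\mathcal{G}_n)_{n\in\mathbb{N}}$ a sequence of finite $l$-groups with $\mathcal{G}_n\le S_{l^n}$ and $\mathcal{G}_n\le\mathcal{G}_{n+1}$ for all $n$ (inside $S_\infty$, where $S_{l^n}$ is the subgroup fixing every integer $>l^n$). Let $\alpha\in\mathcal{G}_k$ be an element of order $l$ for some $k$, and $\mathcal{H}=\langle\alpha\rangle$. Let $d_n$ be the maximal order of a metacyclic subgroup of $\mathcal{G}_n$. Assume (1) $\lim_{n\to\infty}|\mathcal{G}_n|/d_n=\infty$, and (2) $\alpha$ has infinitely many conjugates in $\bigcup_{n}\mathcal{G}_n$. Then there is $N$ such that for every $n\ge N$ and every metacyclic subgroup $D\le\mathcal{G}_n$ one has $S(D,\mathcal{H})>1$, double cosets being taken in $\mathcal{G}_n$.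
   Context: $S_\infty$ is the group of permutations of $\mathbb{N}$ fixing all but finitely many elements. A group is metacyclic if it has a cyclic normal subgroup with cyclic quotient. For subgroups $A,B$ of a finite group $\mathcal{G}$, a double coset $AxB$ ($x\in\mathcal{G}$) is split if $|AxB|=|A||B|$ (equivalently $x^{-1}Ax\cap B=1$), and $S(A,B)$ denotes the number of distinct split double cosets. *)

theory Defs
  imports "HOL-Algebra.Sym_Groups" "HOL-Algebra.Elementary_Groups" "HOL-Algebra.Multiplicative_Group" "HOL-Analysis.Analysis"
begin

definition metacyclic :: "('a, 'b) monoid_scheme \<Rightarrow> bool" where
  "metacyclic G \<longleftrightarrow> (\<exists>N. N \<lhd> G \<and> cyclic_group (G\<lparr>carrier := N\<rparr>) \<and> cyclic_group (G Mod N))"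

definition double_coset :: "('a, 'b) monoid_scheme \<Rightarrow> 'a set \<Rightarrow> 'a \<Rightarrow> 'a set \<Rightarrow> 'a set" where
  "double_coset G A x B = {a \<otimes>\<^bsub>G\<^esub> x \<otimes>\<^bsub>G\<^esub> b | a b. a \<in> A \<and> b \<in> B}"

definition split_count :: "('a, 'b) monoid_scheme \<Rightarrow> 'a set \<Rightarrow> 'a set \<Rightarrow> nat" where
  "split_count G A B = card {double_coset G A x B | x. x \<in> carrier G \<and>
                              card (double_coset G A x B) = card A * card B}"

(* The finite symmetric group S_m inside S_infinity: permutations of {1..m}
   (the natural numbers are {1,2,...}; 0 is fixed and plays no role). *)
abbreviation Sym :: "nat \<Rightarrow> (nat \<Rightarrow> nat) monoid" where
  "Sym m \<equiv> sym_group m"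

abbreviation grp :: "nat \<Rightarrow> (nat \<Rightarrow> nat) set \<Rightarrow> (nat \<Rightarrow> nat) monoid" where
  "grp m C \<equiv> (sym_group m)\<lparr>carrier := C\<rparr>"

end

theory Submission
  imports Defs "HOL-Algebra.Group_Action"
begin

(*
  Fix n, a metacyclic subgroup D of G_n and H = <alpha>.  A double
  coset D x H is split as soon as conjugation by x maps no nontrivial element of
  H into D; as alpha has prime order, this can only fail if x alpha x^-1 \<in> D.
  By orbit-stabilizer, the proportion of such "bad" x in G_n is at most
  |K_n \<inter> D| / |K_n|, where K_n is the conjugacy class of alpha in G_n.  All
  conjugates of alpha move at most s = |supp alpha| points, so they and their
  pairwise quotients have exponent dividing E = ((2s)!)!, and a metacyclic group
  contains at most E^2 such elements.  Hence |K_n \<inter> D| \<le> E^2, while |K_n| \<rightarrow> \<infinity>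
  by hypothesis (2), and hypothesis (1) gives 2|D||H| \<le> |G_n| for large n.  Then
  the bad elements and one split double coset cannot exhaust G_n, which yields a
  second split double coset.
*)


section \<open>Conjugation and split double cosets in finite groups\<close>

definition conj_class :: "('a, 'b) monoid_scheme \<Rightarrow> 'a \<Rightarrow> 'a set" where
  "conj_class G a = {x \<otimes>\<^bsub>G\<^esub> a \<otimes>\<^bsub>G\<^esub> inv\<^bsub>G\<^esub> x | x. x \<in> carrier G}"

lemma (in group) inv_mult_cancel_left:
  "x \<in> carrier G \<Longrightarrow> y \<in> carrier G \<Longrightarrow> inv x \<otimes> (x \<otimes> y) = y"
  by (simp add: m_assoc[symmetric])

lemma (in group) conj_nat_pow:
  assumes x: "x \<in> carrier G" and h: "h \<in> carrier G"
  shows "(x \<otimes> h \<otimes> inv x) [^] (j::nat) = x \<otimes> h [^] j \<otimes> inv x"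
proof (induction j)
  case 0
  then show ?case using assms by simp
next
  case (Suc j)
  have "(x \<otimes> h \<otimes> inv x) [^] Suc j = (x \<otimes> h [^] j \<otimes> inv x) \<otimes> (x \<otimes> h \<otimes> inv x)"
    using Suc by simp
  also have "\<dots> = x \<otimes> (h [^] j \<otimes> h) \<otimes> inv x"
    using assms by (simp add: m_assoc inv_mult_cancel_left)
  finally show ?case using assms by simp
qed

text \<open>If a nontrivial power of an element of prime order is conjugated into a
  subgroup, then so is the element itself, since it is a power of that power.\<close>

lemma (in group) conj_in_subgroup_if_conj_power:
  assumes l: "prime (l::nat)" and a: "a \<in> carrier G" and al: "a [^] l = \<one>"
    and sD: "subgroup D G" and x: "x \<in> carrier G"
    and ai: "a [^] (i::nat) \<noteq> \<one>" and conj_in: "x \<otimes> a [^] i \<otimes> inv x \<in> D"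
  shows "x \<otimes> a \<otimes> inv x \<in> D"
proof -
  have "\<not> l dvd i"
  proof
    assume "l dvd i"
    then obtain q where "i = l * q" by blast
    then have "a [^] i = (a [^] l) [^] q" using a by (simp add: nat_pow_pow)
    then show False using ai al by simp
  qed
  then have "i \<noteq> 0" and gcd: "gcd i l = 1"
    using prime_imp_coprime[OF l] by (metis dvd_0_right, simp add: coprime_iff_gcd_eq_1 gcd.commute)
  obtain u v where uv: "i * u = l * v + gcd i l" using bezout_nat[OF \<open>i \<noteq> 0\<close>] by blast
  have "(a [^] i) [^] u = (a [^] l) [^] v \<otimes> a"
    using a uv gcd by (simp add: nat_pow_pow nat_pow_mult)
  then have power: "(a [^] i) [^] u = a" using a al by simp
  have "(x \<otimes> a [^] i \<otimes> inv x) [^] u \<in> D"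
    using conj_in by (induction u) (simp_all add: subgroup.one_closed[OF sD] subgroup.m_closed[OF sD])
  then show ?thesis using conj_nat_pow[OF x nat_pow_closed[OF a], of i u] power by simp
qed

lemma card_le_card_image_mult:
  assumes fin: "finite Y" and fibres: "\<And>c. c \<in> f ` Y \<Longrightarrow> card {y \<in> Y. f y = c} \<le> m"
  shows "card Y \<le> card (f ` Y) * m"
proof -
  have "card Y = card (\<Union>c\<in>f ` Y. {y \<in> Y. f y = c})" by (rule arg_cong[where f = card]) auto
  also have "\<dots> \<le> (\<Sum>c\<in>f ` Y. card {y \<in> Y. f y = c})" using fin by (intro card_UN_le) simp
  also have "\<dots> \<le> (\<Sum>c\<in>f ` Y. m)" using fibres by (intro sum_mono) auto
  finally show ?thesis by simp
qed

lemma (in group) card_conj_class_mult_centralizer: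
  assumes a: "a \<in> carrier G" and fin: "finite (carrier G)"
  shows "card (conj_class G a) * card {g \<in> carrier G. g \<otimes> a \<otimes> inv g = a} = card (carrier G)"
proof -
  let ?phi = "\<lambda>g. (\<lambda>h \<in> carrier G. g \<otimes> h \<otimes> inv g)"
  have "card (orbit G ?phi a) * card (stabilizer G ?phi a) = card (carrier G)"
    using group_action.orbit_stabilizer_theorem[OF action_by_conjugation a] fin
    by (simp add: Coset.order_def)
  moreover have "orbit G ?phi a = conj_class G a"
    unfolding orbit_def conj_class_def using a by auto
  moreover have "stabilizer G ?phi a = {g \<in> carrier G. g \<otimes> a \<otimes> inv g = a}"
    unfolding stabilizer_def using a by auto
  ultimately show ?thesis by simp
qed

text \<open>Each conjugate t of a arises from at most as many conjugating elements as
  the centralizer of a has: left translation by inv x0 maps them into it.\<close>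

lemma (in group) card_conjugators_le:
  assumes fin: "finite (carrier G)" and a: "a \<in> carrier G" and t: "t \<in> conj_class G a"
  shows "card {x \<in> carrier G. x \<otimes> a \<otimes> inv x = t} \<le> card {g \<in> carrier G. g \<otimes> a \<otimes> inv g = a}"
proof -
  obtain x0 where x0: "x0 \<in> carrier G" "t = x0 \<otimes> a \<otimes> inv x0"
    using t unfolding conj_class_def by blast
  have inj: "inj_on (\<lambda>x. inv x0 \<otimes> x) {x \<in> carrier G. x \<otimes> a \<otimes> inv x = t}"
    by (rule inj_onI) (use x0 in auto)
  have "inv x0 \<otimes> x \<otimes> a \<otimes> inv (inv x0 \<otimes> x) = a"
    if x: "x \<in> carrier G" "x \<otimes> a \<otimes> inv x = t" for x
  proof -
    have "inv x0 \<otimes> x \<otimes> a \<otimes> inv (inv x0 \<otimes> x) = inv x0 \<otimes> (x \<otimes> a \<otimes> inv x) \<otimes> x0"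
      using x(1) x0(1) a by (simp add: inv_mult_group m_assoc)
    also have "\<dots> = a" using x(2) x0 a by (simp add: m_assoc inv_mult_cancel_left)
    finally show ?thesis .
  qed
  then have "(\<lambda>x. inv x0 \<otimes> x) ` {x \<in> carrier G. x \<otimes> a \<otimes> inv x = t}
      \<subseteq> {g \<in> carrier G. g \<otimes> a \<otimes> inv g = a}"
    using x0(1) by auto
  then show ?thesis using card_inj_on_le[OF inj] fin by simp
qed

lemma (in group) card_conjugating_into:
  assumes fin: "finite (carrier G)" and a: "a \<in> carrier G"
  shows "card {x \<in> carrier G. x \<otimes> a \<otimes> inv x \<in> D} * card (conj_class G a)
     \<le> card (conj_class G a \<inter> D) * card (carrier G)"
proof -
  let ?X = "{x \<in> carrier G. x \<otimes> a \<otimes> inv x \<in> D}" and ?conj = "\<lambda>x. x \<otimes> a \<otimes> inv x"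
  let ?Z = "{g \<in> carrier G. g \<otimes> a \<otimes> inv g = a}"
  have "card (?conj ` ?X) \<le> card (conj_class G a \<inter> D)"
    using fin by (intro card_mono) (auto simp: conj_class_def)
  moreover have "card ?X \<le> card (?conj ` ?X) * card ?Z"
  proof (rule card_le_card_image_mult)
    show "card {y \<in> ?X. ?conj y = t} \<le> card ?Z" if t: "t \<in> ?conj ` ?X" for t
    proof -
      have "{y \<in> ?X. ?conj y = t} = {x \<in> carrier G. ?conj x = t}" using t by auto
      moreover have "t \<in> conj_class G a" using t unfolding conj_class_def by blast
      ultimately show ?thesis using card_conjugators_le[OF fin a] by simp
    qed
  qed (use fin in simp)
  ultimately have "card ?X * card (conj_class G a)
      \<le> card (conj_class G a \<inter> D) * card ?Z * card (conj_class G a)"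
    by (meson le_trans mult_le_mono1)
  also have "\<dots> = card (conj_class G a \<inter> D) * card (carrier G)"
    using card_conj_class_mult_centralizer[OF a fin] by (simp add: mult.assoc mult.commute)
  finally show ?thesis .
qed

lemma (in group) card_double_coset_split:
  assumes sD: "subgroup D G" and sH: "subgroup H G" and x: "x \<in> carrier G"
    and no_conj: "\<forall>h\<in>H. h \<noteq> \<one> \<longrightarrow> x \<otimes> h \<otimes> inv x \<notin> D"
  shows "card (double_coset G D x H) = card D * card H"
proof -
  have DG: "D \<subseteq> carrier G" and HG: "H \<subseteq> carrier G" using sD sH subgroup.subset by auto
  have inj: "inj_on (\<lambda>(a, b). a \<otimes> x \<otimes> b) (D \<times> H)"
  proof (rule inj_onI, clarify)
    fix a b a' b' assume a: "a \<in> D" "a' \<in> D" and b: "b \<in> H" "b' \<in> H"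
      and eq: "a \<otimes> x \<otimes> b = a' \<otimes> x \<otimes> b'"
    have ac: "a \<in> carrier G" "a' \<in> carrier G" and bc: "b \<in> carrier G" "b' \<in> carrier G"
      using a b DG HG by auto
    define h where "h = b' \<otimes> inv b"
    have hH: "h \<in> H" unfolding h_def using b sH
      by (simp add: subgroup.m_closed subgroup.m_inv_closed)
    have "x \<otimes> h \<otimes> inv x = inv a' \<otimes> (a' \<otimes> x \<otimes> b') \<otimes> inv b \<otimes> inv x"
      using ac bc x unfolding h_def by (simp add: m_assoc inv_mult_cancel_left)
    also have "\<dots> = inv a' \<otimes> (a \<otimes> x \<otimes> b) \<otimes> inv b \<otimes> inv x" using eq by simp
    also have "\<dots> = inv a' \<otimes> a" using ac bc x by (simp add: m_assoc)
    also have "\<dots> \<in> D" using a sD by (simp add: subgroup.m_closed subgroup.m_inv_closed)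
    finally have "h = \<one>" using no_conj hH by blast
    then have "b' = b" using bc unfolding h_def by (metis inv_equality inv_inv inv_closed)
    moreover from this have "a = a'" using eq ac bc x by simp
    ultimately show "a = a' \<and> b = b'" by simp
  qed
  have "double_coset G D x H = (\<lambda>(a, b). a \<otimes> x \<otimes> b) ` (D \<times> H)"
    unfolding double_coset_def by auto
  then show ?thesis using card_image[OF inj] by (simp add: card_cartesian_product)
qed

lemma (in group) two_split_double_cosets:
  assumes fin: "finite (carrier G)" and sD: "subgroup D G" and sH: "subgroup H G"
    and few: "card {x \<in> carrier G. \<exists>h\<in>H. h \<noteq> \<one> \<and> x \<otimes> h \<otimes> inv x \<in> D} + card D * card H
               < card (carrier G)"
  shows "2 \<le> split_count G D H"
proof -
  define Bad where "Bad = {x \<in> carrier G. \<exists>h\<in>H. h \<noteq> \<one> \<and> x \<otimes> h \<otimes> inv x \<in> D}"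
  have DG: "D \<subseteq> carrier G" and HG: "H \<subseteq> carrier G" using sD sH subgroup.subset by auto
  have split: "card (double_coset G D x H) = card D * card H" if "x \<in> carrier G" "x \<notin> Bad" for x
    using card_double_coset_split[OF sD sH that(1)] that unfolding Bad_def by blast
  have finBad: "finite Bad" unfolding Bad_def using fin by simp
  have "card Bad < card (carrier G)" using few unfolding Bad_def by simp
  then have "\<not> carrier G \<subseteq> Bad" by (meson card_mono[OF finBad] not_le)
  then obtain x1 where x1: "x1 \<in> carrier G" "x1 \<notin> Bad" by blast
  define C1 where "C1 = double_coset G D x1 H"
  have "C1 = (\<lambda>(a, b). a \<otimes> x1 \<otimes> b) ` (D \<times> H)" unfolding C1_def double_coset_def by auto
  then have "finite (Bad \<union> C1)"
    using finite_subset[OF DG fin] finite_subset[OF HG fin] finBad by simp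
  moreover have "card (Bad \<union> C1) < card (carrier G)"
    using card_Un_le[of Bad C1] few split[OF x1] unfolding Bad_def C1_def by simp
  ultimately have "\<not> carrier G \<subseteq> Bad \<union> C1" by (meson card_mono not_le)
  then obtain x2 where x2: "x2 \<in> carrier G" "x2 \<notin> Bad" "x2 \<notin> C1" by blast
  have "x2 = \<one> \<otimes> x2 \<otimes> \<one>" using x2(1) by simp
  then have "x2 \<in> double_coset G D x2 H" unfolding double_coset_def
    using subgroup.one_closed[OF sD] subgroup.one_closed[OF sH] by blast
  then have distinct: "C1 \<noteq> double_coset G D x2 H" using x2 by blast
  define S where "S = {double_coset G D x H | x. x \<in> carrier G \<and>
                              card (double_coset G D x H) = card D * card H}"
  have "{C1, double_coset G D x2 H} \<subseteq> S" unfolding S_def C1_def using x1 x2 split by blast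
  moreover have "finite S" unfolding S_def using fin by simp
  ultimately have "card {C1, double_coset G D x2 H} \<le> card S" by (rule card_mono[rotated])
  then show ?thesis using distinct unfolding split_count_def S_def by simp
qed

lemma (in group) two_split_double_cosets_prime_order:
  assumes fin: "finite (carrier G)" and l: "prime (l::nat)"
    and a: "a \<in> carrier G" and a_pow_l: "a [^] l = \<one>"
    and sD: "subgroup D G" and sH: "subgroup H G" and H_pow: "\<forall>h\<in>H. \<exists>i::nat. h = a [^] i"
    and few_in_D: "2 * card (conj_class G a \<inter> D) < card (conj_class G a)"
    and small: "2 * (card D * card H) \<le> card (carrier G)"
  shows "2 \<le> split_count G D H"
proof -
  define Bad where "Bad = {x \<in> carrier G. x \<otimes> a \<otimes> inv x \<in> D}"
  have bad: "x \<in> Bad" if x: "x \<in> carrier G" and h: "h \<in> H" "h \<noteq> \<one>" "x \<otimes> h \<otimes> inv x \<in> D" for x h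
  proof -
    obtain i :: nat where "h = a [^] i" using H_pow h(1) by blast
    then show ?thesis
      using conj_in_subgroup_if_conj_power[OF l a a_pow_l sD x, of i] h x unfolding Bad_def by simp
  qed
  have "{x \<in> carrier G. \<exists>h\<in>H. h \<noteq> \<one> \<and> x \<otimes> h \<otimes> inv x \<in> D} \<subseteq> Bad"
    using bad by blast
  then have card_bad:
      "card {x \<in> carrier G. \<exists>h\<in>H. h \<noteq> \<one> \<and> x \<otimes> h \<otimes> inv x \<in> D} \<le> card Bad"
    by (rule card_mono[rotated]) (simp add: Bad_def fin)
  have "0 < card (carrier G)" using fin a card_gt_0_iff by blast
  have "(2 * card Bad) * card (conj_class G a) \<le> 2 * card (conj_class G a \<inter> D) * card (carrier G)"
    using card_conjugating_into[OF fin a, of D] unfolding Bad_def by simp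
  also have "\<dots> < card (carrier G) * card (conj_class G a)"
    using few_in_D \<open>0 < card (carrier G)\<close> by (simp add: mult.commute)
  finally have "2 * card Bad < card (carrier G)" by (simp only: mult_less_cancel2)
  then show ?thesis using two_split_double_cosets[OF fin sD sH] card_bad small by simp
qed


section \<open>Metacyclic groups contain few elements of bounded exponent\<close>

lemma (in group) card_roots_cyclic_group:
  assumes cyc: "cyclic_group G" and fin: "finite (carrier G)" and E: "0 < E"
  shows "card {c \<in> carrier G. c [^] E = \<one>} \<le> E"
proof -
  obtain x where x: "x \<in> carrier G" "subgroup_generated G {x} = G"
    using cyc unfolding cyclic_group_def by blast
  have "carrier G = generate G {x}"
    using x by (metis carrier_subgroup_generated Int_absorb1 empty_subsetI insert_subset)
  also have "\<dots> = {x [^] k | k. k \<in> {0 .. ord x - 1}}"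
    using generate_pow_on_finite_carrier[OF fin x(1)] ord_elems[OF fin x(1)] by simp
  finally have carrier_pow: "carrier G = {x [^] k | k. k \<in> {0 .. ord x - 1}}" .
  have ord_pos: "1 \<le> ord x" using ord_ge_1[OF fin x(1)] .
  define K where "K = {k \<in> {0..ord x - 1}. ord x dvd k * E}"
  have fin_K: "finite K" unfolding K_def by simp
  have roots: "{c \<in> carrier G. c [^] E = \<one>} \<subseteq> (\<lambda>k. x [^] k) ` K"
  proof
    fix c assume c: "c \<in> {c \<in> carrier G. c [^] E = \<one>}"
    then obtain k where k: "k \<in> {0..ord x - 1}" "c = x [^] k" using carrier_pow by auto
    then have "x [^] (k * E) = \<one>" using c x(1) by (simp add: nat_pow_pow)
    then show "c \<in> (\<lambda>k. x [^] k) ` K" using k pow_eq_id[OF x(1)] unfolding K_def by auto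
  qed
  text \<open>Each k \<in> K is determined by k E / ord x, which is less than E.\<close>
  have inj: "inj_on (\<lambda>k. k * E div ord x) K"
  proof (rule inj_onI)
    fix a b assume "a \<in> K" "b \<in> K" and eq: "a * E div ord x = b * E div ord x"
    then have "a * E = b * E" unfolding K_def by (metis dvd_div_mult_self mem_Collect_eq)
    then show "a = b" using E by simp
  qed
  have img: "(\<lambda>k. k * E div ord x) ` K \<subseteq> {..<E}"
  proof
    fix y assume "y \<in> (\<lambda>k. k * E div ord x) ` K"
    then obtain k where k: "k \<in> K" "y = k * E div ord x" by blast
    then have "k * E < ord x * E" using ord_pos E unfolding K_def by auto
    then show "y \<in> {..<E}" using k ord_pos by (simp add: div_less_iff_less_mult mult.commute)
  qed
  have "card {c \<in> carrier G. c [^] E = \<one>} \<le> card ((\<lambda>k. x [^] k) ` K)"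
    using roots fin_K by (intro card_mono) simp_all
  also have "\<dots> \<le> card K" by (rule card_image_le[OF fin_K])
  also have "\<dots> \<le> card {..<E}" by (rule card_inj_on_le[OF inj img]) simp
  finally show ?thesis by simp
qed

text \<open>If all elements of Y satisfy y^E = 1, their cosets modulo a normal subgroup
  H with finite cyclic quotient are solutions of c^E = 1 in G/H, so there are
  at most E of them.\<close>

lemma (in normal) card_cosets_of_roots:
  assumes cyc: "cyclic_group (G Mod H)" and fin: "finite (carrier G)" and E: "0 < E"
    and Y: "Y \<subseteq> carrier G" and pow: "\<And>y. y \<in> Y \<Longrightarrow> y [^] E = \<one>"
  shows "card ((\<lambda>y. H #> y) ` Y) \<le> E"
proof -
  interpret Q: group "G Mod H" by (rule factorgroup_is_group)
  have fin_Q: "finite (carrier (G Mod H))" using fin by (simp add: carrier_FactGroup)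
  have "H #> y \<in> {c \<in> carrier (G Mod H). c [^]\<^bsub>G Mod H\<^esub> E = \<one>\<^bsub>G Mod H\<^esub>}" if y: "y \<in> Y" for y
  proof -
    have "(H #> y) [^]\<^bsub>G Mod H\<^esub> E = H #> (y [^] E)"
      using hom_nat_pow[OF r_coset_hom_Mod _ is_group Q.is_group] y Y by auto
    then show ?thesis using pow[OF y] y Y by (auto simp: carrier_FactGroup coset_mult_one[OF subset])
  qed
  then have "card ((\<lambda>y. H #> y) ` Y)
      \<le> card {c \<in> carrier (G Mod H). c [^]\<^bsub>G Mod H\<^esub> E = \<one>\<^bsub>G Mod H\<^esub>}"
    using fin_Q by (intro card_mono) auto
  also have "\<dots> \<le> E" by (rule Q.card_roots_cyclic_group[OF cyc fin_Q E])
  finally show ?thesis .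
qed

text \<open>If all quotients of elements of Y satisfy c^E = 1, then Y meets each coset
  of a finite cyclic normal subgroup H in at most E elements: right translation
  by inv y0 maps Y \<inter> H y0 injectively to solutions of c^E = 1 in H.\<close>

lemma (in normal) card_coset_fibre:
  assumes cyc: "cyclic_group (G\<lparr>carrier := H\<rparr>)" and fin: "finite H" and E: "0 < E"
    and Y: "Y \<subseteq> carrier G"
    and quot: "\<And>y z. y \<in> Y \<Longrightarrow> z \<in> Y \<Longrightarrow> (y \<otimes> inv z) [^] E = \<one>"
    and y0: "y0 \<in> Y"
  shows "card {y \<in> Y. H #> y = H #> y0} \<le> E"
proof -
  interpret HG: group "G\<lparr>carrier := H\<rparr>" by (rule subgroup_imp_group[OF subgroup_axioms])
  let ?R = "{c \<in> carrier (G\<lparr>carrier := H\<rparr>). c [^]\<^bsub>G\<lparr>carrier := H\<rparr>\<^esub> E = \<one>\<^bsub>G\<lparr>carrier := H\<rparr>\<^esub>}"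
  have y0G: "y0 \<in> carrier G" using y0 Y by blast
  have inj: "inj_on (\<lambda>y. y \<otimes> inv y0) {y \<in> Y. H #> y = H #> y0}"
    using Y y0G by (intro inj_onI) (simp add: subset_iff)
  have "y \<otimes> inv y0 \<in> ?R" if y: "y \<in> Y" "H #> y = H #> y0" for y
  proof -
    have "y \<in> H #> y0" using rcos_self[OF _ subgroup_axioms] y Y by force
    then have "y \<otimes> inv y0 \<in> H" using rcos_module_imp[OF is_group y0G] by simp
    then show ?thesis using quot[OF y(1) y0] by (simp add: nat_pow_consistent[symmetric])
  qed
  then have "card {y \<in> Y. H #> y = H #> y0} \<le> card ?R"
    using card_inj_on_le[OF inj] fin by (simp add: image_subset_iff)
  also have "\<dots> \<le> E" using HG.card_roots_cyclic_group[OF cyc _ E] fin by simp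
  finally show ?thesis .
qed

text \<open>In a finite metacyclic group, a set Y whose elements and pairwise quotients
  all satisfy y^E = 1 has at most E^2 elements: it meets at most E cosets of the
  cyclic normal subgroup, and each of them in at most E elements.\<close>

lemma (in group) metacyclic_card_bound:
  assumes mc: "metacyclic G" and fin: "finite (carrier G)" and E: "0 < E"
    and Y: "Y \<subseteq> carrier G"
    and pow: "\<And>y. y \<in> Y \<Longrightarrow> y [^] E = \<one>"
    and quot: "\<And>y z. y \<in> Y \<Longrightarrow> z \<in> Y \<Longrightarrow> (y \<otimes> inv z) [^] E = \<one>"
  shows "card Y \<le> E * E"
proof -
  obtain N where "N \<lhd> G" and cyc_N: "cyclic_group (G\<lparr>carrier := N\<rparr>)"
    and cyc_Q: "cyclic_group (G Mod N)"
    using mc unfolding metacyclic_def by blast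
  interpret N: normal N G by fact
  have "card Y \<le> card ((\<lambda>y. N #> y) ` Y) * E"
    using N.card_coset_fibre[OF cyc_N finite_subset[OF N.subset fin] E Y quot]
      finite_subset[OF Y fin]
    by (intro card_le_card_image_mult) auto
  also have "\<dots> \<le> E * E" using N.card_cosets_of_roots[OF cyc_Q fin E Y pow] by simp
  finally show ?thesis .
qed


section \<open>Permutations moving few points\<close>

definition moved_points :: "('a \<Rightarrow> 'a) \<Rightarrow> 'a set" where
  "moved_points p = {x. p x \<noteq> x}"

lemma moved_points_comp: "moved_points (f \<circ> g) \<subseteq> moved_points f \<union> moved_points g"
  unfolding moved_points_def by auto

lemma moved_points_inv:
  assumes "bij p"
  shows "moved_points (inv' p) \<subseteq> moved_points p"
  unfolding moved_points_def using inv_f_eq[OF bij_is_inj[OF assms]] by blast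

lemma card_moved_points_comp_inv:
  assumes z: "bij z" and fin: "finite (moved_points y)" "finite (moved_points z)"
  shows "card (moved_points (y \<circ> inv' z)) \<le> card (moved_points y) + card (moved_points z)"
proof -
  have "moved_points (y \<circ> inv' z) \<subseteq> moved_points y \<union> moved_points z"
    using moved_points_comp[of y "inv' z"] moved_points_inv[OF z] by blast
  then have "card (moved_points (y \<circ> inv' z)) \<le> card (moved_points y \<union> moved_points z)"
    using fin by (intro card_mono) auto
  also have "\<dots> \<le> card (moved_points y) + card (moved_points z)" by (rule card_Un_le)
  finally show ?thesis .
qed

lemma moved_points_conj:
  assumes "bij g"
  shows "moved_points (g \<circ> a \<circ> inv' g) \<subseteq> g ` moved_points a"
proof
  fix i assume i: "i \<in> moved_points (g \<circ> a \<circ> inv' g)"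
  have gi: "g (inv' g i) = i" using surj_f_inv_f[OF bij_is_surj[OF assms]] .
  then have "inv' g i \<in> moved_points a" using i unfolding moved_points_def by auto
  then show "i \<in> g ` moved_points a" using gi by (metis imageI)
qed

lemma card_moved_points_conj:
  assumes "bij g" and "finite (moved_points a)"
  shows "card (moved_points (g \<circ> a \<circ> inv' g)) \<le> card (moved_points a)"
  using card_mono[OF _ moved_points_conj[OF assms(1)]] card_image_le[OF assms(2)] assms(2)
  by (meson finite_imageI le_trans)

lemma permutes_moved_points:
  assumes "bij p"
  shows "p permutes moved_points p"
proof -
  have "bij_betw p UNIV UNIV" using assms by (simp add: bij_def)
  also have "UNIV = moved_points p \<union> {x. p x = x}" unfolding moved_points_def by auto
  finally have "bij_betw p (moved_points p) (moved_points p)"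
    by (rule bij_betw_partition) (auto simp: bij_betw_fixpoints moved_points_def)
  then show ?thesis by (auto intro: bij_imp_permutes simp: moved_points_def)
qed

text \<open>A permutation moving at most r points has exponent dividing (r!)!: among its
  first r! + 1 powers, all permutations of its finitely many moved points, two
  coincide.\<close>

lemma funpow_fact_fact_moved_points:
  assumes bij: "bij p" and fin: "finite (moved_points p)" and card: "card (moved_points p) \<le> r"
  shows "p ^^ fact (fact r) = id"
proof -
  let ?P = "{q. q permutes moved_points p}"
  have fin_P: "finite ?P" using fin by (simp add: finite_permutations)
  have card_P: "card ?P = fact (card (moved_points p))" using fin card_permutations by blast
  have "(\<lambda>i. p ^^ i) ` {0..card ?P} \<subseteq> ?P"
    using permutes_funpow[OF permutes_moved_points[OF bij]] by auto
  then have "\<not> inj_on (\<lambda>i. p ^^ i) {0..card ?P}"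
    using card_inj_on_le[OF _ _ fin_P] by fastforce
  then obtain i j where ij: "i \<le> card ?P" "j \<le> card ?P" "i < j" "p ^^ i = p ^^ j"
    unfolding inj_on_def by (metis atLeastAtMost_iff nat_neq_iff)
  have period: "p ^^ (j - i) = id"
  proof
    fix x show "(p ^^ (j - i)) x = id x"
      using funpow_diff[OF bij_is_inj[OF bij], of i j x] ij by simp
  qed
  have "j - i \<le> fact r" using ij card_P fact_mono[OF card, where 'a = nat] by simp
  then have "(j - i) dvd fact (fact r)" using ij(3) by (intro dvd_fact) auto
  then obtain c where "fact (fact r) = (j - i) * c" by blast
  then show ?thesis by (simp add: funpow_mult[symmetric] period)
qed


lemma finite_carrier_sym: "finite (carrier (Sym m))"
  by (rule card_ge_0_finite) (simp add: sym_group_card_carrier)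

lemma bij_of_sym: "p \<in> carrier (Sym m) \<Longrightarrow> bij p"
  by (simp add: sym_group_carrier permutes_bij)

lemma finite_moved_points_sym: "p \<in> carrier (Sym m) \<Longrightarrow> finite (moved_points p)"
  unfolding sym_group_carrier moved_points_def permutes_def
  by (rule finite_subset[of _ "{1..m}"]) auto

lemma perm_nat_pow: "x [^]\<^bsub>grp m C\<^esub> (n::nat) = x ^^ n"
  by (induction n) (simp_all add: sym_group_mult sym_group_one funpow_swap1 comp_def)

lemma perm_group_inv:
  assumes "subgroup C (Sym m)" and "p \<in> C"
  shows "inv\<^bsub>grp m C\<^esub> p = inv' p"
  using group.m_inv_consistent[OF sym_group_is_group assms] subgroup.subset[OF assms(1)] assms(2)
  by auto

lemma perm_generate:
  assumes sC: "subgroup C (Sym m)" and a: "a \<in> C"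
  shows "generate (grp m C) {a} = range (\<lambda>i. a ^^ i)"
proof -
  have "group (grp m C)" by (rule group.subgroup_imp_group[OF sym_group_is_group sC])
  moreover have "finite C" using finite_subset[OF subgroup.subset[OF sC] finite_carrier_sym] .
  ultimately show ?thesis
    using group.generate_pow_on_finite_carrier[of "grp m C" a] a by (auto simp: perm_nat_pow)
qed

lemma perm_subgroup_generated:
  assumes sC: "subgroup C (Sym m)" and a: "a \<in> C"
  shows "carrier (subgroup_generated (grp m C) {a}) = range (\<lambda>i. a ^^ i)"
    and "range (\<lambda>i. a ^^ i) \<subseteq> C"
proof -
  show "carrier (subgroup_generated (grp m C) {a}) = range (\<lambda>i. a ^^ i)"
    using perm_generate[OF sC a] a by (simp add: carrier_subgroup_generated)
  show "range (\<lambda>i. a ^^ i) \<subseteq> C"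
    using group.generate_incl[OF group.subgroup_imp_group[OF sym_group_is_group sC], of "{a}"]
      perm_generate[OF sC a] a by simp
qed

lemma perm_funpow_ord:
  assumes sC: "subgroup C (Sym m)" and a: "a \<in> C"
  shows "a ^^ group.ord (grp m C) a = id"
  using group.pow_ord_eq_1[OF group.subgroup_imp_group[OF sym_group_is_group sC], of a] a
  by (simp add: perm_nat_pow sym_group_one)

text \<open>The metacyclic bound for permutation groups: a metacyclic group of
  permutations contains at most ((2s)!)!^2 elements moving at most s points,
  because such elements and their pairwise quotients have exponent ((2s)!)!.\<close>

lemma metacyclic_perm_group_card_bound:
  assumes sD: "subgroup D (Sym m)" and mc: "metacyclic (grp m D)" and Y: "Y \<subseteq> D"
    and few_moved: "\<forall>y\<in>Y. card (moved_points y) \<le> s"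
  shows "card Y \<le> fact (fact (2 * s)) * fact (fact (2 * s))"
proof -
  interpret D: group "grp m D" by (rule group.subgroup_imp_group[OF sym_group_is_group sD])
  define E :: nat where "E = fact (fact (2 * s))"
  have in_sym: "y \<in> carrier (Sym m)" if "y \<in> D" for y using that subgroup.subset[OF sD] by blast
  have exponent: "y [^]\<^bsub>grp m D\<^esub> E = \<one>\<^bsub>grp m D\<^esub>"
    if y: "y \<in> D" and moved: "card (moved_points y) \<le> 2 * s" for y
  proof -
    have "y ^^ E = id" unfolding E_def
      using funpow_fact_fact_moved_points[OF bij_of_sym finite_moved_points_sym moved] in_sym[OF y]
      by blast
    then show ?thesis by (simp add: perm_nat_pow sym_group_one)
  qed
  show ?thesis
  proof (unfold E_def[symmetric], rule D.metacyclic_card_bound[OF mc])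
    show "finite (carrier (grp m D))"
      using finite_subset[OF subgroup.subset[OF sD] finite_carrier_sym] by simp
    show "Y \<subseteq> carrier (grp m D)" using Y by simp
    show "y [^]\<^bsub>grp m D\<^esub> E = \<one>\<^bsub>grp m D\<^esub>" if y: "y \<in> Y" for y
      using exponent[of y] bspec[OF few_moved y] y Y by auto
    show "(y \<otimes>\<^bsub>grp m D\<^esub> inv\<^bsub>grp m D\<^esub> z) [^]\<^bsub>grp m D\<^esub> E = \<one>\<^bsub>grp m D\<^esub>"
      if y: "y \<in> Y" and z: "z \<in> Y" for y z
    proof -
      have yD: "y \<in> D" and zD: "z \<in> D" using y z Y by auto
      have yz: "y \<otimes>\<^bsub>grp m D\<^esub> inv\<^bsub>grp m D\<^esub> z = y \<circ> inv' z"
        using perm_group_inv[OF sD zD] by (simp add: sym_group_mult)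
      have "card (moved_points (y \<circ> inv' z)) \<le> card (moved_points y) + card (moved_points z)"
        using card_moved_points_comp_inv[OF bij_of_sym finite_moved_points_sym finite_moved_points_sym]
          in_sym yD zD by blast
      also have "\<dots> \<le> 2 * s" using bspec[OF few_moved y] bspec[OF few_moved z] by simp
      finally have "card (moved_points (y \<circ> inv' z)) \<le> 2 * s" .
      moreover have "y \<circ> inv' z \<in> D"
        using D.m_closed[of y "inv\<^bsub>grp m D\<^esub> z"] D.inv_closed[of z] yz yD zD by simp
      ultimately show ?thesis using exponent yz by simp
    qed
  qed (simp add: E_def)
qed


section \<open>The theorem at a fixed level\<close>

lemma two_split_double_cosets_perm_group:
  assumes sC: "subgroup C (Sym m)" and l: "prime (l::nat)"
    and a: "a \<in> C" and a_pow_l: "a ^^ l = id"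
    and sD: "subgroup D (grp m C)" and mD: "metacyclic (grp m D)"
    and many_conj: "2 * (fact (fact (2 * card (moved_points a))) * fact (fact (2 * card (moved_points a))))
                      < card {g \<circ> a \<circ> inv' g | g. g \<in> C}"
    and small: "2 * (card D * card (range (\<lambda>i. a ^^ i))) \<le> card C"
  shows "2 \<le> split_count (grp m C) D (range (\<lambda>i. a ^^ i))"
proof -
  interpret C: group "grp m C" by (rule group.subgroup_imp_group[OF sym_group_is_group sC])
  have in_sym: "g \<in> carrier (Sym m)" if "g \<in> C" for g using that subgroup.subset[OF sC] by blast
  have class_eq: "conj_class (grp m C) a = {g \<circ> a \<circ> inv' g | g. g \<in> C}"
    unfolding conj_class_def Setcompr_eq_image
    by (intro image_cong) (simp_all add: sym_group_mult perm_group_inv[OF sC])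
  have bound: "card (conj_class (grp m C) a \<inter> D)
      \<le> fact (fact (2 * card (moved_points a))) * fact (fact (2 * card (moved_points a)))"
  proof (rule metacyclic_perm_group_card_bound[OF group.incl_subgroup[OF sym_group_is_group sC sD] mD])
    show "\<forall>y\<in>conj_class (grp m C) a \<inter> D. card (moved_points y) \<le> card (moved_points a)"
      unfolding class_eq
      using card_moved_points_conj[OF bij_of_sym finite_moved_points_sym[OF in_sym[OF a]]] in_sym
      by auto
  qed blast
  have sH: "subgroup (range (\<lambda>i. a ^^ i)) (grp m C)"
    using C.generate_is_subgroup[of "{a}"] perm_generate[OF sC a] a by simp
  show ?thesis
  proof (rule C.two_split_double_cosets_prime_order[OF _ l _ _ sD sH])
    show "finite (carrier (grp m C))"
      using finite_subset[OF subgroup.subset[OF sC] finite_carrier_sym] by simp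
    show "a \<in> carrier (grp m C)" using a by simp
    show "a [^]\<^bsub>grp m C\<^esub> l = \<one>\<^bsub>grp m C\<^esub>" using a_pow_l by (simp add: perm_nat_pow sym_group_one)
    show "\<forall>h\<in>range (\<lambda>i. a ^^ i). \<exists>i::nat. h = a [^]\<^bsub>grp m C\<^esub> i" by (auto simp: perm_nat_pow)
    show "2 * card (conj_class (grp m C) a \<inter> D) < card (conj_class (grp m C) a)"
      using bound many_conj unfolding class_eq by linarith
    show "2 * (card D * card (range (\<lambda>i. a ^^ i))) \<le> card (carrier (grp m C))" using small by simp
  qed
qed


text \<open>The cardinalities of an increasing sequence of finite sets with infinite
  union eventually exceed any bound: every finite subset of the union lies in
  one member.\<close>

lemma card_eventually_gt_if_Union_infinite:
  fixes K :: "nat \<Rightarrow> 'a set"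
  assumes mono: "mono K" and fin: "\<And>n. finite (K n)" and inf: "infinite (\<Union>n. K n)"
  shows "\<exists>N. \<forall>n\<ge>N. M < card (K n)"
proof -
  have "\<exists>n. F \<subseteq> K n" if "finite F" "F \<subseteq> (\<Union>n. K n)" for F
    using that
  proof (induction F rule: finite_induct)
    case (insert x F)
    then obtain n n' where "F \<subseteq> K n" "x \<in> K n'" by blast
    then have "insert x F \<subseteq> K (max n n')"
      using monoD[OF mono, of n "max n n'"] monoD[OF mono, of n' "max n n'"] by auto
    then show ?case by blast
  qed simp
  moreover obtain F where F: "finite F" "card F = Suc M" "F \<subseteq> (\<Union>n. K n)"
    using infinite_arbitrarily_large[OF inf] by blast
  ultimately obtain N where "F \<subseteq> K N" by blast
  have "Suc M \<le> card (K n)" if "N \<le> n" for n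
    using card_mono[OF fin order.trans[OF \<open>F \<subseteq> K N\<close> monoD[OF mono that]]] F(2) by simp
  then show ?thesis by (auto simp: Suc_le_eq)
qed

lemma eventually_mult_le_if_ratio_at_top:
  fixes g d :: "nat \<Rightarrow> nat"
  assumes lim: "filterlim (\<lambda>n. real (g n) / real (d n)) at_top sequentially"
  shows "\<exists>N. \<forall>n\<ge>N. 0 < d n \<longrightarrow> c * d n \<le> g n"
proof -
  have "\<forall>\<^sub>F n in sequentially. real c \<le> real (g n) / real (d n)"
    using lim[unfolded filterlim_at_top] by (rule allE)
  then obtain N where N: "\<forall>n\<ge>N. real c \<le> real (g n) / real (d n)"
    unfolding eventually_sequentially ..
  have "c * d n \<le> g n" if "N \<le> n" "0 < d n" for n
  proof -
    have "real c \<le> real (g n) / real (d n)" using N that(1) by blast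
    then have "real c * real (d n) \<le> real (g n)" using that(2) by (simp add: pos_le_divide_eq)
    then show ?thesis by (metis of_nat_le_iff of_nat_mult)
  qed
  then show ?thesis by blast
qed

lemma card_le_Max_card:
  assumes fin: "finite C" and sub: "\<And>D. P D \<Longrightarrow> D \<subseteq> C" and P: "P D"
  shows "card D \<le> Max {card D | D. P D}"
proof (rule Max_ge)
  have "{card D | D. P D} \<subseteq> {..card C}" using card_mono[OF fin] sub by auto
  then show "finite {card D | D. P D}" using finite_subset by blast
  show "card D \<in> {card D | D. P D}" using P by blast
qed


theorem mainTheorem13:
  fixes l :: nat and G :: "nat \<Rightarrow> (nat \<Rightarrow> nat) set" and \<alpha> :: "nat \<Rightarrow> nat" and k :: nat
    and d :: "nat \<Rightarrow> nat"
  assumes l_prime: "prime l"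
    and G_sub: "\<And>n. subgroup (G n) (Sym (l ^ n))"
    and G_lgroup: "\<And>n. \<exists>e. card (G n) = l ^ e"
    and G_mono: "\<And>n. G n \<subseteq> G (Suc n)"
    and alpha_in: "\<alpha> \<in> G k"
    and alpha_ord: "group.ord (grp (l ^ k) (G k)) \<alpha> = l"
    and d_def: "\<And>n. d n = Max {card D | D. subgroup D (grp (l ^ n) (G n)) \<and>
                                             metacyclic (grp (l ^ n) D)}"
    and lim: "filterlim (\<lambda>n. real (card (G n)) / real (d n)) at_top sequentially"
    and conj_inf: "infinite {g \<circ> \<alpha> \<circ> Hilbert_Choice.inv g | g. g \<in> (\<Union>n. G n)}"
  shows "\<exists>N. \<forall>n\<ge>N. \<forall>D. subgroup D (grp (l ^ n) (G n)) \<and> metacyclic (grp (l ^ n) D) \<longrightarrow>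
           split_count (grp (l ^ n) (G n)) D
             (carrier (subgroup_generated (grp (l ^ k) (G k)) {\<alpha>})) > 1"
proof -
  define E :: nat where "E = fact (fact (2 * card (moved_points \<alpha>)))"
  have fin_G: "finite (G n)" for n using finite_subset[OF subgroup.subset[OF G_sub] finite_carrier_sym] .
  have mono_G: "mono G" using G_mono by (simp add: mono_iff_le_Suc)
  have alpha_pow_l: "\<alpha> ^^ l = id" using perm_funpow_ord[OF G_sub alpha_in] alpha_ord by simp
  note H_eq = perm_subgroup_generated(1)[OF G_sub alpha_in]
    and H_sub = perm_subgroup_generated(2)[OF G_sub alpha_in]
  text \<open>Hypothesis (2): the conjugacy classes of alpha eventually exceed 2 E^2.\<close>
  have "mono (\<lambda>n. {g \<circ> \<alpha> \<circ> inv' g | g. g \<in> G n})" using mono_G unfolding mono_def by blast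
  moreover have "(\<Union>n. {g \<circ> \<alpha> \<circ> inv' g | g. g \<in> G n}) = {g \<circ> \<alpha> \<circ> inv' g | g. g \<in> (\<Union>n. G n)}"
    by blast
  ultimately obtain N0 where N0: "\<forall>n\<ge>N0. 2 * (E * E) < card {g \<circ> \<alpha> \<circ> inv' g | g. g \<in> G n}"
    using card_eventually_gt_if_Union_infinite[of "\<lambda>n. {g \<circ> \<alpha> \<circ> inv' g | g. g \<in> G n}"]
      fin_G conj_inf by fastforce
  text \<open>Hypothesis (1): eventually 2 |G_k| d_n \<le> |G_n|.\<close>
  obtain N1 where N1: "\<forall>n\<ge>N1. 0 < d n \<longrightarrow> 2 * card (G k) * d n \<le> card (G n)"
    using eventually_mult_le_if_ratio_at_top[OF lim] by blast
  show ?thesis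
  proof (intro exI[of _ "max k (max N0 N1)"] allI impI, elim conjE)
    fix n D assume n: "max k (max N0 N1) \<le> n"
      and sD: "subgroup D (grp (l ^ n) (G n))" and mD: "metacyclic (grp (l ^ n) D)"
    have D_le: "card D \<le> d n"
      unfolding d_def
    proof (rule card_le_Max_card[OF fin_G[of n]])
      show "subgroup D (grp (l ^ n) (G n)) \<and> metacyclic (grp (l ^ n) D)" using sD mD by blast
    qed (auto simp: subgroup_def)
    moreover have "0 < card D" using subgroup.finite_imp_card_positive[OF sD] fin_G by simp
    ultimately have "2 * (d n * card (G k)) \<le> card (G n)" using N1 n by (simp add: mult_ac)
    moreover have "card D * card (range (\<lambda>i. \<alpha> ^^ i)) \<le> d n * card (G k)"
      using D_le card_mono[OF fin_G H_sub] by (rule mult_le_mono)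
    ultimately have small: "2 * (card D * card (range (\<lambda>i. \<alpha> ^^ i))) \<le> card (G n)" by linarith
    have "\<alpha> \<in> G n" using monoD[OF mono_G, of k n] alpha_in n by auto
    then have "2 \<le> split_count (grp (l ^ n) (G n)) D (range (\<lambda>i. \<alpha> ^^ i))"
      using two_split_double_cosets_perm_group[OF G_sub l_prime _ alpha_pow_l sD mD _ small] N0 n
      unfolding E_def by simp
    then show "split_count (grp (l ^ n) (G n)) D
             (carrier (subgroup_generated (grp (l ^ k) (G k)) {\<alpha>})) > 1"
      unfolding H_eq by simp
  qed
qed

end
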